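(* Let $M$ be an $n\times n$ matrix with entries in $K(x)$ which is Fuchsian and normalized (with respect to a normalization $N_{x_0}$ chosen for each point $x_0$) at every finite point $x_0\in K$. Let $T$ be an invertible $n\times n$ matrix with entries in $K(x)$ such that $M_T=T^{-1}(MT-\partial_xT)$ is Fuchsian and normalized (with respect to the same $N_{x_0}$) at every finite point $x_0\in K$. Then the entries of $T$ and of $T^{-1}$ are polynomials in $x$, and $\det T$ is a nonzero constant (independent of $x$). If moreover both $M$ and $M_T$ are Fuchsian and normalized (with respect to the same normalization $N_\infty$) also at $x=\infty$, then $T$ is a constant matrix.
   Context: Let $K$ be an algebraically closed field of characteristic zero (e.g. $\mathbb{C}$ or an algebraic closure of $\mathbb{C}(\epsilon)$). For a finite point $x_0\in K$, a matrix $M$ with entries in $K(x)$ is called Fuchsian at $x_0$ if $M(x)=\frac{A}{x-x_0}+O((x-x_0)^0)$ for a constant matrix $A$, called the matrix residue at $x_0$. $M$ is Fuchsian at $\infty$ with residue $A$ if $-y^{-2}M(1/y)$ is Fuchsian at $y=0$ with residue $A$. A normalization is a subset $N\subset K$ containing exactly one element of each coset $\lambda+\mathbb{Z}$; $M$ Fuchsian at $x_0$ is normalized at $x_0$ with respect to $N$ if all eigenvalues of its residue at $x_0$ lie in $N$. *)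

theory Defs
  imports "HOL-Computational_Algebra.Polynomial_Factorial"
          "HOL-Computational_Algebra.Fraction_Field"
          "Jordan_Normal_Form.Determinant"
          "Jordan_Normal_Form.Char_Poly"
begin

text \<open>Rational functions K(x) are modelled as the fraction field \<open>'a poly fract\<close>.
  \<open>rnum r / rden r\<close> is some (arbitrarily chosen) representation \<open>r = p / q\<close>, \<open>q \<noteq> 0\<close>;
  the operations below do not depend on the choice.\<close>

type_synonym 'a ratfun = "'a poly fract"

definition rrep :: "'a::field ratfun \<Rightarrow> 'a poly \<times> 'a poly" where
  "rrep r = (SOME pq. snd pq \<noteq> 0 \<and> r = Fract (fst pq) (snd pq))"

definition rnum :: "'a::field ratfun \<Rightarrow> 'a poly" where
  "rnum r = fst (rrep r)"

definition rden :: "'a::field ratfun \<Rightarrow> 'a poly" where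
  "rden r = snd (rrep r)"

definition regular_at :: "'a::field \<Rightarrow> 'a ratfun \<Rightarrow> bool" where
  "regular_at x0 r \<longleftrightarrow> (\<exists>p q. poly q x0 \<noteq> 0 \<and> r = Fract p q)"

definition eval_at :: "'a::field \<Rightarrow> 'a ratfun \<Rightarrow> 'a" where
  "eval_at x0 r = (SOME v. \<exists>p q. poly q x0 \<noteq> 0 \<and> r = Fract p q \<and> v = poly p x0 / poly q x0)"

definition rderiv :: "'a::field ratfun \<Rightarrow> 'a ratfun" where
  "rderiv r = Fract (pderiv (rnum r) * rden r - rnum r * pderiv (rden r)) (rden r * rden r)"

text \<open>Substitution x := 1/y: for r = p/q, r(1/y) = (rev p * y^deg q) / (rev q * y^deg p).\<close>
definition subst_inv :: "'a::field ratfun \<Rightarrow> 'a ratfun" where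
  "subst_inv r = Fract (reflect_poly (rnum r) * monom 1 (degree (rden r)))
                       (reflect_poly (rden r) * monom 1 (degree (rnum r)))"

definition rX :: "'a::field ratfun" where "rX = to_fract [:0, 1:]"
definition rconst :: "'a::field \<Rightarrow> 'a ratfun" where "rconst c = to_fract [:c:]"

definition mat_deriv :: "'a::field ratfun mat \<Rightarrow> 'a ratfun mat" where
  "mat_deriv T = map_mat rderiv T"

definition fuchsian_at :: "'a::field \<Rightarrow> 'a ratfun mat \<Rightarrow> bool" where
  "fuchsian_at x0 M \<longleftrightarrow>
     (\<forall>i < dim_row M. \<forall>j < dim_col M. regular_at x0 ((rX - rconst x0) * M $$ (i, j)))"

definition residue_at :: "'a::field \<Rightarrow> 'a ratfun mat \<Rightarrow> 'a mat" where
  "residue_at x0 M = map_mat (\<lambda>r. eval_at x0 ((rX - rconst x0) * r)) M"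

definition at_infinity_transform :: "'a::field ratfun mat \<Rightarrow> 'a ratfun mat" where
  "at_infinity_transform M = map_mat (\<lambda>r. - (subst_inv r) / (rX * rX)) M"

definition fuchsian_at_infinity :: "'a::field ratfun mat \<Rightarrow> bool" where
  "fuchsian_at_infinity M \<longleftrightarrow> fuchsian_at 0 (at_infinity_transform M)"

definition residue_at_infinity :: "'a::field ratfun mat \<Rightarrow> 'a mat" where
  "residue_at_infinity M = residue_at 0 (at_infinity_transform M)"

definition is_normalization :: "'a::field_char_0 set \<Rightarrow> bool" where
  "is_normalization N \<longleftrightarrow> (\<forall>l. \<exists>!m. m \<in> N \<and> (\<exists>k::int. m = l + of_int k))"

definition normalized_at :: "'a::field_char_0 set \<Rightarrow> 'a \<Rightarrow> 'a ratfun mat \<Rightarrow> bool" where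
  "normalized_at N x0 M \<longleftrightarrow> fuchsian_at x0 M \<and>
     (\<forall>e. eigenvalue (residue_at x0 M) e \<longrightarrow> e \<in> N)"

definition normalized_at_infinity :: "'a::field_char_0 set \<Rightarrow> 'a ratfun mat \<Rightarrow> bool" where
  "normalized_at_infinity N M \<longleftrightarrow> fuchsian_at_infinity M \<and>
     (\<forall>e. eigenvalue (residue_at_infinity M) e \<longrightarrow> e \<in> N)"

text \<open>Gauge transformation M_T = T^{-1} (M T - dT/dx), with Tinv the inverse of T.\<close>
definition gauge :: "'a::field ratfun mat \<Rightarrow> 'a ratfun mat \<Rightarrow> 'a ratfun mat \<Rightarrow> 'a ratfun mat" where
  "gauge M T Tinv = Tinv * (M * T - mat_deriv T)"

definition is_polynomial :: "'a::field ratfun \<Rightarrow> bool" where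
  "is_polynomial r \<longleftrightarrow> (\<exists>p. r = to_fract p)"

end

theory Submission
  imports Defs
begin

text \<open>Near a finite point \<open>x\<^sub>0\<close> write \<open>(x - x\<^sub>0)\<^sup>k T = S\<^sub>0 + O(x - x\<^sub>0)\<close> with \<open>S\<^sub>0 \<noteq> 0\<close>, where \<open>k\<close>
  is the pole order of \<open>T\<close>. The lowest-order term of the gauge equation \<open>T M\<^sub>T = M T - T'\<close> gives
  \<open>(A + k) S\<^sub>0 = S\<^sub>0 B\<close> for the residues \<open>A\<close> of \<open>M\<close> and \<open>B\<close> of \<open>M\<^sub>T\<close>. Their eigenvalues lie in the
  same normalization, so for \<open>k > 0\<close> the matrices \<open>A + k\<close> and \<open>B\<close> have no common eigenvalue and
  Sylvester's argument forces \<open>S\<^sub>0 = 0\<close>; hence \<open>T\<close> has no poles. As \<open>T\<^sup>-\<^sup>1\<close> gauges \<open>M\<^sub>T\<close> back to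
  \<open>M\<close>, it is polynomial as well, and \<open>det T\<close> is a unit of \<open>K[x]\<close>. The substitution \<open>x = 1/y\<close>
  preserves the shape of the gauge equation, so at infinity the same argument shows that \<open>T(1/y)\<close>
  is regular at \<open>y = 0\<close>, which forces the polynomial entries of \<open>T\<close> to be constant.\<close>

section \<open>Matrices intertwining matrices without common eigenvalues\<close>

lemma dvd_mult_cancel_no_common_root:
  fixes f g h :: "'a::alg_closed_field poly"
  assumes "f dvd g * h" and "\<And>x. poly f x = 0 \<Longrightarrow> poly g x \<noteq> 0"
  shows "f dvd h"
  using assms
proof (induction "degree f" arbitrary: f h rule: less_induct)
  case less
  show ?case
  proof (cases "degree f = 0")
    case deg0: True
    show ?thesis
    proof (cases "f = 0")
      case True
      then have "g * h = 0" using less.prems(1) by simp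
      moreover have "g \<noteq> 0" using True less.prems(2)[of 0] by auto
      ultimately show ?thesis by simp
    next
      case False
      then have "is_unit f" using deg0 by (simp add: is_unit_iff_degree)
      then show ?thesis by (rule unit_imp_dvd)
    qed
  next
    case False
    then obtain r where r: "poly f r = 0" using alg_closed_imp_poly_has_root by blast
    then obtain f1 where f1: "f = [:-r, 1:] * f1" by (metis dvdE poly_eq_0_iff_dvd)
    have "poly (g * h) r = 0"
      using less.prems(1) r by (metis dvdE mult_zero_left poly_mult)
    then have "poly h r = 0" using less.prems(2) r by simp
    then obtain h1 where h1: "h = [:-r, 1:] * h1" by (metis dvdE poly_eq_0_iff_dvd)
    have "[:-r, 1:] * f1 dvd [:-r, 1:] * (g * h1)"
      using less.prems(1) unfolding f1 h1 by (simp only: mult.left_commute)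
    then have "f1 dvd g * h1" by (rule dvd_mult_cancel_left[THEN iffD1, THEN disjE]) auto
    moreover have "degree f = Suc (degree f1)"
      using False f1 degree_mult_eq[of "[:-r, 1:]" f1] by fastforce
    moreover have "poly f1 x = 0 \<Longrightarrow> poly g x \<noteq> 0" for x
      using less.prems(2)[of x] f1 by simp
    ultimately have "f1 dvd h1" using less.hyps[of f1 h1] by auto
    then show ?thesis unfolding f1 h1 by (rule mult_dvd_mono[OF dvd_refl])
  qed
qed

lemma mult_mat_index_sum:
  assumes "A \<in> carrier_mat nr n" "B \<in> carrier_mat n nc" "i < nr" "j < nc"
  shows "(A * B) $$ (i, j) = (\<Sum>l<n. A $$ (i, l) * B $$ (l, j))"
  using assms by (auto simp: scalar_prod_def atLeast0LessThan intro!: sum.cong)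

lemma smult_mat_cancel:
  fixes A B :: "'a::idom mat"
  assumes "c \<cdot>\<^sub>m A = c \<cdot>\<^sub>m B" "c \<noteq> 0" "A \<in> carrier_mat nr nc" "B \<in> carrier_mat nr nc"
  shows "A = B"
proof (rule eq_matI)
  fix i j assume "i < dim_row B" "j < dim_col B"
  then have "c * A $$ (i, j) = c * B $$ (i, j)"
    using arg_cong[OF assms(1), of "\<lambda>M. M $$ (i, j)"] assms(3,4) by simp
  then show "A $$ (i, j) = B $$ (i, j)" using assms(2) by simp
qed (use assms(3,4) in auto)

lemma smult_mat_if_dvd_entries:
  fixes A :: "'a::comm_semiring_1 mat"
  assumes A: "A \<in> carrier_mat nr nc" and dvd: "\<And>i j. i < nr \<Longrightarrow> j < nc \<Longrightarrow> c dvd A $$ (i, j)"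
  obtains B where "B \<in> carrier_mat nr nc" "A = c \<cdot>\<^sub>m B"
proof
  define B where "B = mat nr nc (\<lambda>ij. SOME b. A $$ ij = c * b)"
  show "B \<in> carrier_mat nr nc" by (simp add: B_def)
  show "A = c \<cdot>\<^sub>m B"
  proof (rule eq_matI)
    fix i j assume "i < dim_row (c \<cdot>\<^sub>m B)" "j < dim_col (c \<cdot>\<^sub>m B)"
    then have ij: "i < nr" "j < nc" by (auto simp: B_def)
    then have "A $$ (i, j) = c * (SOME b. A $$ (i, j) = c * b)"
      using dvd[OF ij] by (auto simp: dvd_def intro: someI_ex)
    then show "A $$ (i, j) = (c \<cdot>\<^sub>m B) $$ (i, j)" using ij by (simp add: B_def)
  qed (use A in \<open>auto simp: B_def\<close>)
qed

lemma add_eq_zero_mat_imp_eq_uminus: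
  fixes A B :: "'a::group_add mat"
  assumes "A \<in> carrier_mat nr nc" "B \<in> carrier_mat nr nc" "A + B = 0\<^sub>m nr nc"
  shows "B = - A"
proof (rule eq_matI)
  fix i j assume "i < dim_row (- A)" "j < dim_col (- A)"
  then have "(A + B) $$ (i, j) = 0" "i < nr" "j < nc" using assms by auto
  then show "B $$ (i, j) = (- A) $$ (i, j)" using assms(1,2) by (simp add: minus_unique)
qed (use assms(1,2) in auto)

lemma eigenvalue_add_smult_one:
  fixes A :: "'a::field mat"
  assumes A: "A \<in> carrier_mat n n" and ev: "eigenvalue (A + c \<cdot>\<^sub>m 1\<^sub>m n) e"
  shows "eigenvalue A (e - c)"
proof -
  have "char_matrix (A + c \<cdot>\<^sub>m 1\<^sub>m n) e = char_matrix A (e - c)"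
    unfolding char_matrix_def by (rule eq_matI) (use A in auto)
  then show ?thesis
    using ev eigenvalue_det[OF A] eigenvalue_det[of "A + c \<cdot>\<^sub>m 1\<^sub>m n" n] A by simp
qed

abbreviation const_poly_mat :: "'a::zero mat \<Rightarrow> 'a poly mat" where
  "const_poly_mat X \<equiv> map_mat (\<lambda>a. [:a:]) X"

lemma char_poly_matrix_conv:
  fixes A :: "'a::comm_ring_1 mat"
  assumes "A \<in> carrier_mat n n"
  shows "char_poly_matrix A = [:0, 1:] \<cdot>\<^sub>m 1\<^sub>m n - const_poly_mat A"
proof (rule eq_matI)
  fix i j assume "i < dim_row (([:0, 1:] \<cdot>\<^sub>m 1\<^sub>m n - const_poly_mat A) :: 'a poly mat)"
    "j < dim_col (([:0, 1:] \<cdot>\<^sub>m 1\<^sub>m n - const_poly_mat A) :: 'a poly mat)"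
  with assms show "char_poly_matrix A $$ (i, j) = ([:0, 1:] \<cdot>\<^sub>m 1\<^sub>m n - const_poly_mat A) $$ (i, j)"
    by (simp add: char_poly_matrix_def)
qed (use assms in \<open>simp_all add: char_poly_matrix_def\<close>)

lemma char_poly_matrix_intertwine:
  fixes P Q X :: "'a::comm_ring_1 mat"
  assumes P: "P \<in> carrier_mat n n" and Q: "Q \<in> carrier_mat n n" and X: "X \<in> carrier_mat n n"
    and PX: "P * X = X * Q"
  shows "char_poly_matrix P * const_poly_mat X = const_poly_mat X * char_poly_matrix Q"
proof -
  have X': "const_poly_mat X \<in> carrier_mat n n" using X by simp
  have "char_poly_matrix P * const_poly_mat X = [:0, 1:] \<cdot>\<^sub>m const_poly_mat X - const_poly_mat (P * X)"
    unfolding char_poly_matrix_conv[OF P] map_poly_mult(1)[OF P X]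
    using P X' by (simp add: minus_mult_distrib_mat[of _ n n] mult_smult_assoc_mat[of _ n n _ n])
  also have "\<dots> = const_poly_mat X * char_poly_matrix Q"
    unfolding char_poly_matrix_conv[OF Q] PX map_poly_mult(1)[OF X Q]
    using Q X' by (subst mult_minus_distrib_mat[of _ n n]) (auto simp: mult_smult_distrib[of _ n n _ n])
  finally show ?thesis .
qed

lemma mult_char_poly_matrix_const_imp_zero:
  fixes Y :: "'a::comm_ring_1 poly mat"
  assumes Y: "Y \<in> carrier_mat n n" and Q: "Q \<in> carrier_mat n n"
    and YQ: "Y * char_poly_matrix Q = const_poly_mat X"
  shows "Y = 0\<^sub>m n n"
proof -
  have "dim_row X = n" using arg_cong[OF YQ, of dim_row] Y by simp
  moreover have "dim_col X = n" using arg_cong[OF YQ, of dim_col] char_poly_matrix_closed[OF Q] by simp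
  ultimately have X: "X \<in> carrier_mat n n" by blast
  have YQ': "[:0, 1:] \<cdot>\<^sub>m Y - Y * const_poly_mat Q = const_poly_mat X"
    using YQ Y Q unfolding char_poly_matrix_conv[OF Q]
    by (subst (asm) mult_minus_distrib_mat[of _ n n]) (auto simp: mult_smult_distrib[of _ n n _ n])
  txt \<open>Comparing coefficients of \<open>x\<^sup>m\<^sup>+\<^sup>1\<close> in \<open>Y (x - Q) = X\<close>:\<close>
  have shift: "coeff (Y $$ (i, j)) m = (\<Sum>l<n. Q $$ (l, j) * coeff (Y $$ (i, l)) (Suc m))"
    if ij: "i < n" "j < n" for i j m
  proof -
    have "pCons 0 (Y $$ (i, j)) - (\<Sum>l<n. Polynomial.smult (Q $$ (l, j)) (Y $$ (i, l))) = [:X $$ (i, j):]"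
      using arg_cong[OF YQ', of "\<lambda>A. A $$ (i, j)"] mult_mat_index_sum[of Y n n "const_poly_mat Q" n i j]
        Y Q X ij by (simp add: mult.commute)
    from arg_cong[OF this, of "\<lambda>p. coeff p (Suc m)"] show ?thesis
      by (simp add: coeff_sum)
  qed
  define D where "D = (\<Sum>i<n. \<Sum>l<n. Suc (degree (Y $$ (i, l))))"
  have high: "coeff (Y $$ (i, l)) m = 0" if "i < n" "l < n" "D \<le> m" for i l m
  proof -
    have "Suc (degree (Y $$ (i, l))) \<le> (\<Sum>l<n. Suc (degree (Y $$ (i, l))))"
      using that by (intro member_le_sum) auto
    also have "\<dots> \<le> D"
      unfolding D_def using that by (intro member_le_sum[of i "{..<n}"]) auto
    finally show ?thesis using that by (intro coeff_eq_0) simp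
  qed
  have "\<forall>i<n. \<forall>l<n. coeff (Y $$ (i, l)) m = 0" if "D \<le> m + k" for m k
    using that
  proof (induction k arbitrary: m)
    case 0
    then show ?case using high by simp
  next
    case (Suc k)
    then have vanish: "\<forall>i<n. \<forall>l<n. coeff (Y $$ (i, l)) (Suc m) = 0" by simp
    show ?case
    proof (intro allI impI)
      fix i l assume il: "i < n" "l < n"
      show "coeff (Y $$ (i, l)) m = 0"
        unfolding shift[OF il] using vanish il(1) by simp
    qed
  qed
  then show ?thesis
    using Y by (intro eq_matI poly_eqI) (auto, metis le_add2)
qed

text \<open>With \<open>\<chi>\<close> the characteristic polynomials, multiplying \<open>(x - P) X = X (x - Q)\<close> by the
  adjugates gives \<open>\<chi>\<^sub>P Z = \<chi>\<^sub>Q W\<close> for \<open>Z = X adj(x - Q)\<close>; coprimality makes \<open>\<chi>\<^sub>Q\<close> divide \<open>Z\<close>,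
  and \<open>Y = Z / \<chi>\<^sub>Q\<close> is the required factor.\<close>
lemma char_poly_matrix_right_factor:
  fixes P Q X :: "'a::alg_closed_field mat"
  assumes P: "P \<in> carrier_mat n n" and Q: "Q \<in> carrier_mat n n" and X: "X \<in> carrier_mat n n"
    and PX: "P * X = X * Q"
    and disjoint: "\<And>e. eigenvalue P e \<Longrightarrow> eigenvalue Q e \<Longrightarrow> False"
  obtains Y where "Y \<in> carrier_mat n n" "Y * char_poly_matrix Q = const_poly_mat X"
proof -
  define CP CQ where "CP = char_poly_matrix P" and "CQ = char_poly_matrix Q"
  define Xh where "Xh = const_poly_mat X"
  have CP: "CP \<in> carrier_mat n n" and CQ: "CQ \<in> carrier_mat n n" and Xh: "Xh \<in> carrier_mat n n"
    using P Q X by (auto simp: CP_def CQ_def Xh_def)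
  have adjP: "adj_mat CP \<in> carrier_mat n n" "adj_mat CP * CP = char_poly P \<cdot>\<^sub>m 1\<^sub>m n"
    using adj_mat[OF CP] by (auto simp: CP_def char_poly_def)
  have adjQ: "adj_mat CQ \<in> carrier_mat n n" "CQ * adj_mat CQ = char_poly Q \<cdot>\<^sub>m 1\<^sub>m n"
    "adj_mat CQ * CQ = char_poly Q \<cdot>\<^sub>m 1\<^sub>m n"
    using adj_mat[OF CQ] by (auto simp: CQ_def char_poly_def)
  define Z where "Z = Xh * adj_mat CQ"
  have Z: "Z \<in> carrier_mat n n" using Xh adjQ by (simp add: Z_def)
  have CPXh: "CP * Xh = Xh * CQ"
    unfolding CP_def CQ_def Xh_def by (rule char_poly_matrix_intertwine[OF P Q X PX])
  have "char_poly P \<cdot>\<^sub>m Z = (adj_mat CP * CP) * (Xh * adj_mat CQ)"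
    unfolding adjP(2) Z_def using Xh adjQ by (simp add: mult_smult_assoc_mat[of _ n n _ n])
  also have "\<dots> = adj_mat CP * ((CP * Xh) * adj_mat CQ)"
    by (simp only: assoc_mult_mat[OF adjP(1) CP mult_carrier_mat[OF Xh adjQ(1)]]
        assoc_mult_mat[OF CP Xh adjQ(1)])
  also have "\<dots> = (adj_mat CP * Xh) * (CQ * adj_mat CQ)"
    unfolding CPXh
    by (simp only: assoc_mult_mat[OF adjP(1) Xh mult_carrier_mat[OF CQ adjQ(1)]]
        assoc_mult_mat[OF Xh CQ adjQ(1)])
  also have "\<dots> = char_poly Q \<cdot>\<^sub>m (adj_mat CP * Xh)"
    unfolding adjQ(2) using adjP Xh by (simp add: mult_smult_distrib[of _ n n _ n])
  finally have cPZ: "char_poly P \<cdot>\<^sub>m Z = char_poly Q \<cdot>\<^sub>m (adj_mat CP * Xh)" .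
  have "char_poly Q dvd Z $$ (i, j)" if "i < n" "j < n" for i j
  proof (rule dvd_mult_cancel_no_common_root)
    show "char_poly Q dvd char_poly P * Z $$ (i, j)"
      using arg_cong[OF cPZ, of "\<lambda>M. M $$ (i, j)"] that Z adjP Xh by simp
    show "poly (char_poly P) x \<noteq> 0" if "poly (char_poly Q) x = 0" for x
      using disjoint that eigenvalue_root_char_poly[OF P] eigenvalue_root_char_poly[OF Q] by blast
  qed
  then obtain Y where Y: "Y \<in> carrier_mat n n" and ZY: "Z = char_poly Q \<cdot>\<^sub>m Y"
    using smult_mat_if_dvd_entries[OF Z] by blast
  have "char_poly Q \<cdot>\<^sub>m (Y * CQ) = Z * CQ"
    unfolding ZY using Y CQ by (simp add: mult_smult_assoc_mat[of _ n n _ n])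
  also have "\<dots> = Xh * (adj_mat CQ * CQ)"
    unfolding Z_def by (rule assoc_mult_mat[OF Xh adjQ(1) CQ])
  also have "\<dots> = char_poly Q \<cdot>\<^sub>m Xh"
    unfolding adjQ(3) using Xh by (simp add: mult_smult_distrib[of _ n n _ n])
  finally have "Y * CQ = Xh"
    by (rule smult_mat_cancel) (use degree_monic_char_poly[OF Q] Y CQ Xh in auto)
  then show ?thesis using that Y by (simp add: CQ_def Xh_def)
qed

lemma sylvester_homogeneous_zero:
  fixes P Q X :: "'a::alg_closed_field mat"
  assumes P: "P \<in> carrier_mat n n" and Q: "Q \<in> carrier_mat n n" and X: "X \<in> carrier_mat n n"
    and PX: "P * X = X * Q"
    and disjoint: "\<And>e. eigenvalue P e \<Longrightarrow> eigenvalue Q e \<Longrightarrow> False"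
  shows "X = 0\<^sub>m n n"
proof -
  obtain Y where Y: "Y \<in> carrier_mat n n" and YQ: "Y * char_poly_matrix Q = const_poly_mat X"
    using char_poly_matrix_right_factor[OF P Q X PX disjoint] .
  then have "const_poly_mat X = 0\<^sub>m n n"
    using mult_char_poly_matrix_const_imp_zero[OF Y Q YQ] YQ left_mult_zero_mat[OF char_poly_matrix_closed[OF Q]]
    by simp
  show ?thesis
  proof (rule eq_matI)
    fix i j assume ij: "i < dim_row (0\<^sub>m n n :: 'a mat)" "j < dim_col (0\<^sub>m n n :: 'a mat)"
    then have "const_poly_mat X $$ (i, j) = 0" using \<open>const_poly_mat X = 0\<^sub>m n n\<close> by simp
    then show "X $$ (i, j) = 0\<^sub>m n n $$ (i, j)" using X ij by simp
  qed (use X in auto)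
qed

section \<open>Rational functions and the derivation \<open>d/dx\<close>\<close>

lemma ratfun_cases:
  obtains p q where "q \<noteq> 0" "r = to_fract p / to_fract q"
  by (cases r) (simp add: Fract_conv_to_fract)

lemma to_fract_power [simp]: "to_fract (p ^ k) = to_fract p ^ k"
  by (induction k) simp_all

lemma to_fract_of_nat [simp]: "to_fract (of_nat k) = of_nat k"
  by (induction k) simp_all

lemma to_fract_quotient_eq_iff:
  assumes "y \<noteq> 0" "v \<noteq> 0"
  shows "to_fract x / to_fract y = to_fract u / to_fract v \<longleftrightarrow> x * v = u * y"
proof -
  have "to_fract x / to_fract y = to_fract u / to_fract v \<longleftrightarrow> to_fract x * to_fract v = to_fract u * to_fract y"
    using assms by (simp add: divide_simps)
  also have "\<dots> \<longleftrightarrow> x * v = u * y"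
    by (simp flip: to_fract_mult)
  finally show ?thesis .
qed

lemma rden_nonzero: "rden r \<noteq> 0"
  and rnum_rden: "to_fract (rnum r) / to_fract (rden r) = r"
proof -
  obtain a b where "r = Fract a b" "b \<noteq> 0" by (cases r)
  then have "\<exists>pq. snd pq \<noteq> 0 \<and> r = Fract (fst pq) (snd pq)" by (intro exI[of _ "(a, b)"]) simp
  from someI_ex[OF this] show "rden r \<noteq> 0" "to_fract (rnum r) / to_fract (rden r) = r"
    by (simp_all add: rnum_def rden_def rrep_def Fract_conv_to_fract)
qed

lemma quotient_rule_representation_independent:
  fixes a b p q :: "'a::field poly"
  assumes "a * q = p * b"
  shows "(pderiv a * b - a * pderiv b) * (q * q) = (pderiv p * q - p * pderiv q) * (b * b)"
proof -
  have d: "pderiv a * q + a * pderiv q = pderiv p * b + p * pderiv b"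
    using arg_cong[OF assms, of pderiv] by (simp add: pderiv_mult algebra_simps)
  have "(pderiv a * b - a * pderiv b) * (q * q)
      = b * q * (pderiv a * q + a * pderiv q) - (a * q) * (b * pderiv q) - (a * q) * pderiv b * q"
    by (simp add: algebra_simps)
  also have "\<dots> = b * q * (pderiv p * b + p * pderiv b) - (p * b) * (b * pderiv q) - (p * b) * pderiv b * q"
    by (simp only: assms d)
  also have "\<dots> = (pderiv p * q - p * pderiv q) * (b * b)"
    by (simp add: algebra_simps)
  finally show ?thesis .
qed

lemma rderiv_quotient:
  assumes "q \<noteq> 0"
  shows "rderiv (to_fract p / to_fract q) = to_fract (pderiv p * q - p * pderiv q) / to_fract (q * q)"
proof -
  define r where "r = to_fract p / to_fract q"
  have "rnum r * q = p * rden r"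
    using rnum_rden[of r] rden_nonzero[of r] assms to_fract_quotient_eq_iff unfolding r_def by metis
  then show ?thesis
    unfolding r_def[symmetric] rderiv_def Fract_conv_to_fract
    using rden_nonzero[of r] assms
    by (subst to_fract_quotient_eq_iff) (auto intro: quotient_rule_representation_independent)
qed

lemma rderiv_to_fract [simp]: "rderiv (to_fract p) = to_fract (pderiv p)"
  using rderiv_quotient[of 1 p] by simp

lemma rderiv_add [simp]: "rderiv (u + v) = rderiv u + rderiv v"
proof -
  obtain a b where ab: "b \<noteq> 0" "u = to_fract a / to_fract b" by (rule ratfun_cases)
  obtain c d where cd: "d \<noteq> 0" "v = to_fract c / to_fract d" by (rule ratfun_cases)
  have uv: "u + v = to_fract (a * d + c * b) / to_fract (b * d)"
    using ab cd by (simp add: field_simps)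
  have "rderiv (u + v) = to_fract (pderiv (a * d + c * b) * (b * d) - (a * d + c * b) * pderiv (b * d)) / to_fract (b * d * (b * d))"
    unfolding uv using ab(1) cd(1) by (simp add: rderiv_quotient del: to_fract_mult to_fract_add)
  also have "\<dots> = rderiv u + rderiv v"
    unfolding ab(2) cd(2) rderiv_quotient[OF ab(1)] rderiv_quotient[OF cd(1)] using ab(1) cd(1)
    by (simp add: field_simps pderiv_add pderiv_mult)
  finally show ?thesis .
qed

lemma rderiv_mult [simp]: "rderiv (u * v) = rderiv u * v + u * rderiv v"
proof -
  obtain a b where ab: "b \<noteq> 0" "u = to_fract a / to_fract b" by (rule ratfun_cases)
  obtain c d where cd: "d \<noteq> 0" "v = to_fract c / to_fract d" by (rule ratfun_cases)
  have uv: "u * v = to_fract (a * c) / to_fract (b * d)"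
    using ab cd by (simp add: field_simps)
  have "rderiv (u * v) = to_fract (pderiv (a * c) * (b * d) - (a * c) * pderiv (b * d)) / to_fract (b * d * (b * d))"
    unfolding uv using ab(1) cd(1) by (simp add: rderiv_quotient del: to_fract_mult to_fract_add)
  also have "\<dots> = rderiv u * v + u * rderiv v"
    unfolding ab(2) cd(2) rderiv_quotient[OF ab(1)] rderiv_quotient[OF cd(1)] using ab(1) cd(1)
    by (simp add: field_simps pderiv_add pderiv_mult)
  finally show ?thesis .
qed

lemma rderiv_0 [simp]: "rderiv 0 = 0"
  using rderiv_to_fract[of 0] by simp

lemma rderiv_1 [simp]: "rderiv 1 = 0"
  using rderiv_to_fract[of 1] by simp

lemma rderiv_uminus [simp]: "rderiv (- u) = - rderiv u"
  using rderiv_add[of u "- u"] by (simp add: eq_neg_iff_add_eq_0 add.commute)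

lemma rderiv_diff [simp]: "rderiv (u - v) = rderiv u - rderiv v"
  using rderiv_add[of u "- v"] by simp

lemma rderiv_sum: "rderiv (\<Sum>x\<in>A. f x) = (\<Sum>x\<in>A. rderiv (f x))"
  by (induction A rule: infinite_finite_induct) auto

lemma rderiv_rconst [simp]: "rderiv (rconst c) = 0"
  unfolding rconst_def by simp

lemma rderiv_rX [simp]: "rderiv rX = 1"
  unfolding rX_def by (simp add: pderiv_pCons pCons_one)

lemma mult_rderiv_power: "u * rderiv (u ^ m) = of_nat m * u ^ m * rderiv u"
  by (induction m) (simp_all add: algebra_simps)

lemma rderiv_divide:
  assumes "v \<noteq> 0"
  shows "rderiv (u / v) = (rderiv u * v - u * rderiv v) / (v * v)"
proof -
  have "rderiv u = rderiv (u / v) * v + (u / v) * rderiv v"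
    using rderiv_mult[of "u / v" v] assms by simp
  then show ?thesis using assms by (simp add: field_simps)
qed

lemma regular_at_iff:
  "regular_at x0 r \<longleftrightarrow> (\<exists>p q. poly q x0 \<noteq> 0 \<and> r = to_fract p / to_fract q)"
  unfolding regular_at_def by (simp add: Fract_conv_to_fract)

lemma regular_atE:
  assumes "regular_at x0 r"
  obtains p q where "poly q x0 \<noteq> 0" "r = to_fract p / to_fract q"
  using assms regular_at_iff by blast

lemma eval_at_quotient:
  assumes q: "poly q x0 \<noteq> 0"
  shows "eval_at x0 (to_fract p / to_fract q) = poly p x0 / poly q x0"
  unfolding eval_at_def
proof (rule some_equality)
  show "\<exists>p' q'. poly q' x0 \<noteq> 0 \<and> to_fract p / to_fract q = Fract p' q' \<and> poly p x0 / poly q x0 = poly p' x0 / poly q' x0"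
    using q by (auto simp: Fract_conv_to_fract)
next
  fix v assume "\<exists>p' q'. poly q' x0 \<noteq> 0 \<and> to_fract p / to_fract q = Fract p' q' \<and> v = poly p' x0 / poly q' x0"
  then obtain p' q' where q': "poly q' x0 \<noteq> 0" and eq: "to_fract p / to_fract q = to_fract p' / to_fract q'"
    and v: "v = poly p' x0 / poly q' x0"
    by (auto simp: Fract_conv_to_fract)
  have "q \<noteq> 0" "q' \<noteq> 0" using q q' by auto
  then have "p * q' = p' * q"
    using eq to_fract_quotient_eq_iff by blast
  then have "poly p x0 * poly q' x0 = poly p' x0 * poly q x0"
    by (metis poly_mult)
  then show "v = poly p x0 / poly q x0"
    using q q' v by (simp add: frac_eq_eq)
qed

lemma regular_at_quotient: "poly q x0 \<noteq> 0 \<Longrightarrow> regular_at x0 (to_fract p / to_fract q)"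
  unfolding regular_at_iff by blast

lemma regular_at_to_fract [simp]: "regular_at x0 (to_fract p)"
  and eval_at_to_fract [simp]: "eval_at x0 (to_fract p) = poly p x0"
  using regular_at_quotient[of 1 x0 p] eval_at_quotient[of 1 x0 p] by simp_all

lemma regular_at_of_nat [simp]: "regular_at x0 (of_nat k)"
  and eval_at_of_nat [simp]: "eval_at x0 (of_nat k) = of_nat k"
  using regular_at_to_fract[of x0 "of_nat k"] eval_at_to_fract[of x0 "of_nat k"] by simp_all

lemma regular_at_add: "regular_at x0 u \<Longrightarrow> regular_at x0 v \<Longrightarrow> regular_at x0 (u + v)"
  and eval_at_add: "regular_at x0 u \<Longrightarrow> regular_at x0 v \<Longrightarrow> eval_at x0 (u + v) = eval_at x0 u + eval_at x0 v"
proof -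
  assume "regular_at x0 u" "regular_at x0 v"
  then obtain a b c d where ab: "poly b x0 \<noteq> 0" "u = to_fract a / to_fract b"
    and cd: "poly d x0 \<noteq> 0" "v = to_fract c / to_fract d"
    by (meson regular_atE)
  have "b \<noteq> 0" "d \<noteq> 0" using ab(1) cd(1) by auto
  then have uv: "u + v = to_fract (a * d + c * b) / to_fract (b * d)"
    using ab cd by (auto simp: field_simps)
  have bd: "poly (b * d) x0 \<noteq> 0" using ab cd by simp
  show "regular_at x0 (u + v)"
    unfolding uv by (rule regular_at_quotient[OF bd])
  show "eval_at x0 (u + v) = eval_at x0 u + eval_at x0 v"
    unfolding uv eval_at_quotient[OF bd] unfolding ab(2) cd(2) eval_at_quotient[OF ab(1)] eval_at_quotient[OF cd(1)]
    using ab(1) cd(1) by (simp add: field_simps)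
qed

lemma regular_at_mult: "regular_at x0 u \<Longrightarrow> regular_at x0 v \<Longrightarrow> regular_at x0 (u * v)"
  and eval_at_mult: "regular_at x0 u \<Longrightarrow> regular_at x0 v \<Longrightarrow> eval_at x0 (u * v) = eval_at x0 u * eval_at x0 v"
proof -
  assume "regular_at x0 u" "regular_at x0 v"
  then obtain a b c d where ab: "poly b x0 \<noteq> 0" "u = to_fract a / to_fract b"
    and cd: "poly d x0 \<noteq> 0" "v = to_fract c / to_fract d"
    by (meson regular_atE)
  have "b \<noteq> 0" "d \<noteq> 0" using ab(1) cd(1) by auto
  then have uv: "u * v = to_fract (a * c) / to_fract (b * d)"
    using ab cd by (auto simp: field_simps)
  have bd: "poly (b * d) x0 \<noteq> 0" using ab cd by simp
  show "regular_at x0 (u * v)"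
    unfolding uv by (rule regular_at_quotient[OF bd])
  show "eval_at x0 (u * v) = eval_at x0 u * eval_at x0 v"
    unfolding uv eval_at_quotient[OF bd] unfolding ab(2) cd(2) eval_at_quotient[OF ab(1)] eval_at_quotient[OF cd(1)]
    using ab(1) cd(1) by simp
qed

lemma regular_at_uminus: "regular_at x0 u \<Longrightarrow> regular_at x0 (- u)"
  and eval_at_uminus: "regular_at x0 u \<Longrightarrow> eval_at x0 (- u) = - eval_at x0 u"
proof -
  assume u: "regular_at x0 u"
  have neg: "- u = to_fract (- 1) * u" by simp
  show "regular_at x0 (- u)"
    unfolding neg using u by (intro regular_at_mult regular_at_to_fract)
  show "eval_at x0 (- u) = - eval_at x0 u"
    unfolding neg eval_at_mult[OF regular_at_to_fract u]
    using eval_at_to_fract[of x0 "- 1"] by simp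
qed

lemma regular_at_diff: "regular_at x0 u \<Longrightarrow> regular_at x0 v \<Longrightarrow> regular_at x0 (u - v)"
  and eval_at_diff: "regular_at x0 u \<Longrightarrow> regular_at x0 v \<Longrightarrow> eval_at x0 (u - v) = eval_at x0 u - eval_at x0 v"
  using regular_at_add[of x0 u "- v"] eval_at_add[of x0 u "- v"] regular_at_uminus[of x0 v]
    eval_at_uminus[of x0 v] by simp_all

lemma regular_at_sum: "(\<And>x. x \<in> A \<Longrightarrow> regular_at x0 (f x)) \<Longrightarrow> regular_at x0 (\<Sum>x\<in>A. f x)"
  by (induction A rule: infinite_finite_induct)
    (auto intro: regular_at_add simp: regular_at_to_fract[of x0 0, simplified])

lemma eval_at_sum:
  "(\<And>x. x \<in> A \<Longrightarrow> regular_at x0 (f x)) \<Longrightarrow> eval_at x0 (\<Sum>x\<in>A. f x) = (\<Sum>x\<in>A. eval_at x0 (f x))"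
  by (induction A rule: infinite_finite_induct)
    (auto simp: eval_at_add regular_at_sum eval_at_to_fract[of x0 0, simplified])

lemma regular_at_rderiv:
  assumes "regular_at x0 u"
  shows "regular_at x0 (rderiv u)"
proof -
  obtain a b where ab: "poly b x0 \<noteq> 0" "u = to_fract a / to_fract b"
    using assms by (rule regular_atE)
  then have "b \<noteq> 0" by auto
  then show ?thesis
    unfolding ab(2) rderiv_quotient[OF \<open>b \<noteq> 0\<close>] using ab(1) by (intro regular_at_quotient) simp
qed

lemma rX_minus_rconst: "rX - rconst x0 = to_fract [:-x0, 1:]"
  unfolding rX_def rconst_def by (simp flip: to_fract_diff)

lemma regular_at_divide_linear_factor:
  assumes "regular_at x0 r" "eval_at x0 r = 0"
  shows "regular_at x0 (r / (rX - rconst x0))"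
proof -
  obtain a b where ab: "poly b x0 \<noteq> 0" "r = to_fract a / to_fract b"
    using assms(1) by (rule regular_atE)
  then have "poly a x0 = 0"
    using assms(2) eval_at_quotient by fastforce
  then obtain a1 where a1: "a = [:-x0, 1:] * a1"
    by (metis dvdE poly_eq_0_iff_dvd)
  have "to_fract [:-x0, 1:] \<noteq> 0" by simp
  then have "r / (rX - rconst x0) = to_fract a1 / to_fract b"
    unfolding ab(2) a1 rX_minus_rconst to_fract_mult by (simp add: field_simps)
  then show ?thesis
    using ab(1) regular_at_quotient by metis
qed

lemma regular_at_power_mult_ex: "\<exists>m. regular_at x0 ((rX - rconst x0) ^ m * r)"
proof -
  obtain a b where ab: "b \<noteq> 0" "r = to_fract a / to_fract b" by (rule ratfun_cases)
  obtain b1 where b1: "b = [:-x0, 1:] ^ order x0 b * b1" "\<not> [:-x0, 1:] dvd b1"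
    using order_decomp[OF ab(1)] by blast
  have "poly b1 x0 \<noteq> 0" using b1(2) poly_eq_0_iff_dvd by blast
  moreover have "(rX - rconst x0) ^ order x0 b * r = to_fract a / to_fract b1"
    unfolding ab(2) using ab(1) by (subst (2) b1(1)) (simp add: rX_minus_rconst)
  ultimately show ?thesis
    using regular_at_quotient by metis
qed

lemma regular_at_power_mult_mono:
  assumes "regular_at x0 ((rX - rconst x0) ^ m * r)" "m \<le> m'"
  shows "regular_at x0 ((rX - rconst x0) ^ m' * r)"
proof -
  have "(rX - rconst x0) ^ m' = (rX - rconst x0) ^ (m' - m) * (rX - rconst x0) ^ m"
    using assms(2) by (simp flip: power_add)
  then have "(rX - rconst x0) ^ m' * r = to_fract ([:-x0, 1:] ^ (m' - m)) * ((rX - rconst x0) ^ m * r)"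
    by (simp add: rX_minus_rconst mult.assoc)
  then show ?thesis
    by (simp only: regular_at_mult[OF regular_at_to_fract assms(1)])
qed

lemma is_polynomial_if_regular_everywhere:
  fixes r :: "'a::alg_closed_field ratfun"
  assumes regular: "\<And>x0. regular_at x0 r"
  shows "is_polynomial r"
proof -
  have "is_polynomial r" if "b \<noteq> 0" "r = to_fract a / to_fract b" for a b
    using that
  proof (induction "degree b" arbitrary: a b rule: less_induct)
    case less
    show ?case
    proof (cases "degree b = 0")
      case True
      then obtain c where c: "b = [:c:]" "c \<noteq> 0"
        using less.prems(1) by (metis degree_eq_zeroE pCons_0_0)
      then have "a = [:c:] * Polynomial.smult (inverse c) a" by simp
      then have "r = to_fract (Polynomial.smult (inverse c) a)"
        unfolding less.prems(2) c(1) using c(2) by (metis nonzero_mult_div_cancel_left to_fract_eq_0_iff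
            to_fract_mult pCons_eq_0_iff)
      then show ?thesis unfolding is_polynomial_def by blast
    next
      case False
      then obtain x0 where "poly b x0 = 0" using alg_closed_imp_poly_has_root by blast
      then obtain b1 where b1: "b = [:-x0, 1:] * b1" by (metis dvdE poly_eq_0_iff_dvd)
      obtain p q where pq: "poly q x0 \<noteq> 0" "r = to_fract p / to_fract q"
        using regular by (rule regular_atE)
      have "a * q = p * b"
        using pq less.prems to_fract_quotient_eq_iff[of b q a p] by fastforce
      then have "poly a x0 = 0"
        using pq(1) \<open>poly b x0 = 0\<close> by (metis mult_eq_0_iff poly_mult)
      then obtain a1 where a1: "a = [:-x0, 1:] * a1" by (metis dvdE poly_eq_0_iff_dvd)
      have "b1 \<noteq> 0" using b1 less.prems(1) by auto
      moreover have "degree b1 < degree b"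
        using b1 \<open>b1 \<noteq> 0\<close> degree_mult_eq[of "[:-x0, 1:]" b1] by simp
      moreover have "r = to_fract a1 / to_fract b1"
        unfolding less.prems(2) a1 b1 to_fract_mult by (rule mult_divide_mult_cancel_left) simp
      ultimately show ?thesis using less.hyps by blast
    qed
  qed
  then show ?thesis by (metis ratfun_cases)
qed

definition mat_regular_at :: "'a::field \<Rightarrow> 'a ratfun mat \<Rightarrow> bool" where
  "mat_regular_at x0 A \<longleftrightarrow> (\<forall>i < dim_row A. \<forall>j < dim_col A. regular_at x0 (A $$ (i, j)))"

definition mat_eval_at :: "'a::field \<Rightarrow> 'a ratfun mat \<Rightarrow> 'a mat" where
  "mat_eval_at x0 A = map_mat (eval_at x0) A"

lemma mat_eval_at_carrier [simp]: "A \<in> carrier_mat nr nc \<Longrightarrow> mat_eval_at x0 A \<in> carrier_mat nr nc"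
  by (simp add: mat_eval_at_def)

lemma mat_regular_at_mult:
  assumes "A \<in> carrier_mat nr n" "B \<in> carrier_mat n nc" "mat_regular_at x0 A" "mat_regular_at x0 B"
  shows "mat_regular_at x0 (A * B)"
    and "mat_eval_at x0 (A * B) = mat_eval_at x0 A * mat_eval_at x0 B"
proof -
  have entry: "regular_at x0 (A $$ (i, l) * B $$ (l, j))"
    "eval_at x0 (A $$ (i, l) * B $$ (l, j)) = eval_at x0 (A $$ (i, l)) * eval_at x0 (B $$ (l, j))"
    if "i < nr" "l < n" "j < nc" for i l j
  proof -
    have "regular_at x0 (A $$ (i, l))" "regular_at x0 (B $$ (l, j))"
      using assms that by (auto simp: mat_regular_at_def)
    then show "regular_at x0 (A $$ (i, l) * B $$ (l, j))"
      "eval_at x0 (A $$ (i, l) * B $$ (l, j)) = eval_at x0 (A $$ (i, l)) * eval_at x0 (B $$ (l, j))"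
      by (simp_all add: regular_at_mult eval_at_mult)
  qed
  show "mat_regular_at x0 (A * B)"
    unfolding mat_regular_at_def
  proof (intro allI impI)
    fix i j assume "i < dim_row (A * B)" "j < dim_col (A * B)"
    then have ij: "i < nr" "j < nc" using assms(1,2) by auto
    show "regular_at x0 ((A * B) $$ (i, j))"
      unfolding mult_mat_index_sum[OF assms(1,2) ij] using ij by (intro regular_at_sum entry(1)) auto
  qed
  show "mat_eval_at x0 (A * B) = mat_eval_at x0 A * mat_eval_at x0 B"
  proof (rule eq_matI)
    fix i j assume "i < dim_row (mat_eval_at x0 A * mat_eval_at x0 B)"
      "j < dim_col (mat_eval_at x0 A * mat_eval_at x0 B)"
    then have ij: "i < nr" "j < nc" using assms(1,2) by (auto simp: mat_eval_at_def)
    have A': "mat_eval_at x0 A \<in> carrier_mat nr n" and B': "mat_eval_at x0 B \<in> carrier_mat n nc"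
      using assms(1,2) by (auto simp: mat_eval_at_def)
    have "(A * B) $$ (i, j) = (\<Sum>l<n. A $$ (i, l) * B $$ (l, j))"
      by (rule mult_mat_index_sum[OF assms(1,2) ij])
    then have "mat_eval_at x0 (A * B) $$ (i, j) = eval_at x0 (\<Sum>l<n. A $$ (i, l) * B $$ (l, j))"
      using assms(1,2) ij by (simp add: mat_eval_at_def)
    also have "\<dots> = (\<Sum>l<n. eval_at x0 (A $$ (i, l)) * eval_at x0 (B $$ (l, j)))"
      using ij entry by (subst eval_at_sum) (auto intro!: sum.cong)
    also have "\<dots> = (mat_eval_at x0 A * mat_eval_at x0 B) $$ (i, j)"
      unfolding mult_mat_index_sum[OF A' B' ij] using assms(1,2) ij by (simp add: mat_eval_at_def)
    finally show "mat_eval_at x0 (A * B) $$ (i, j) = (mat_eval_at x0 A * mat_eval_at x0 B) $$ (i, j)" .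
  qed (use assms(1,2) in \<open>auto simp: mat_eval_at_def\<close>)
qed

lemma mat_regular_at_add:
  assumes "A \<in> carrier_mat nr nc" "B \<in> carrier_mat nr nc" "mat_regular_at x0 A" "mat_regular_at x0 B"
  shows "mat_regular_at x0 (A + B)"
    and "mat_eval_at x0 (A + B) = mat_eval_at x0 A + mat_eval_at x0 B"
  using assms by (auto simp: mat_regular_at_def mat_eval_at_def regular_at_add eval_at_add intro!: eq_matI)

lemma mat_regular_at_diff:
  assumes "A \<in> carrier_mat nr nc" "B \<in> carrier_mat nr nc" "mat_regular_at x0 A" "mat_regular_at x0 B"
  shows "mat_regular_at x0 (A - B)"
    and "mat_eval_at x0 (A - B) = mat_eval_at x0 A - mat_eval_at x0 B"
  using assms by (auto simp: mat_regular_at_def mat_eval_at_def regular_at_diff eval_at_diff intro!: eq_matI)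

lemma mat_regular_at_smult:
  assumes "regular_at x0 c" "mat_regular_at x0 A"
  shows "mat_regular_at x0 (c \<cdot>\<^sub>m A)"
    and "mat_eval_at x0 (c \<cdot>\<^sub>m A) = eval_at x0 c \<cdot>\<^sub>m mat_eval_at x0 A"
  using assms by (auto simp: mat_regular_at_def mat_eval_at_def regular_at_mult eval_at_mult intro!: eq_matI)

lemma mat_regular_at_divide_linear_factor:
  assumes "mat_regular_at x0 ((rX - rconst x0) \<cdot>\<^sub>m A)" "mat_eval_at x0 ((rX - rconst x0) \<cdot>\<^sub>m A) = 0\<^sub>m (dim_row A) (dim_col A)"
  shows "mat_regular_at x0 A"
  unfolding mat_regular_at_def
proof (intro allI impI)
  fix i j assume ij: "i < dim_row A" "j < dim_col A"
  have "regular_at x0 ((rX - rconst x0) * A $$ (i, j))"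
    using assms(1) ij by (auto simp: mat_regular_at_def)
  moreover have "eval_at x0 ((rX - rconst x0) * A $$ (i, j)) = 0"
    using arg_cong[OF assms(2), of "\<lambda>B. B $$ (i, j)"] ij by (simp add: mat_eval_at_def)
  ultimately have "regular_at x0 ((rX - rconst x0) * A $$ (i, j) / (rX - rconst x0))"
    by (rule regular_at_divide_linear_factor)
  then show "regular_at x0 (A $$ (i, j))"
    using rX_minus_rconst[of x0] by simp
qed

lemma mat_regular_at_power_smult_ex: "\<exists>m. mat_regular_at x0 ((rX - rconst x0) ^ m \<cdot>\<^sub>m A)"
proof -
  have "\<forall>ij. \<exists>m. regular_at x0 ((rX - rconst x0) ^ m * A $$ ij)"
    using regular_at_power_mult_ex by blast
  then obtain f where f: "\<And>ij. regular_at x0 ((rX - rconst x0) ^ f ij * A $$ ij)"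
    by metis
  define m where "m = (\<Sum>ij\<in>{..<dim_row A} \<times> {..<dim_col A}. f ij)"
  have "regular_at x0 ((rX - rconst x0) ^ m * A $$ (i, j))" if "i < dim_row A" "j < dim_col A" for i j
  proof (rule regular_at_power_mult_mono[OF f])
    show "f (i, j) \<le> m" unfolding m_def using that by (intro member_le_sum) auto
  qed
  then show ?thesis unfolding mat_regular_at_def by auto
qed

lemma mat_deriv_carrier [simp]: "A \<in> carrier_mat nr nc \<Longrightarrow> mat_deriv A \<in> carrier_mat nr nc"
  unfolding mat_deriv_def by simp

lemma dim_row_mat_deriv [simp]: "dim_row (mat_deriv A) = dim_row A"
  and dim_col_mat_deriv [simp]: "dim_col (mat_deriv A) = dim_col A"
  unfolding mat_deriv_def by simp_all

lemma index_mat_deriv [simp]: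
  "i < dim_row A \<Longrightarrow> j < dim_col A \<Longrightarrow> mat_deriv A $$ (i, j) = rderiv (A $$ (i, j))"
  by (simp add: mat_deriv_def)

lemma mat_regular_at_deriv: "mat_regular_at x0 A \<Longrightarrow> mat_regular_at x0 (mat_deriv A)"
  by (simp add: mat_regular_at_def regular_at_rderiv)

lemma mat_deriv_one [simp]: "mat_deriv (1\<^sub>m n) = 0\<^sub>m n n"
  by (rule eq_matI) (auto simp: mat_deriv_def)

lemma mat_deriv_smult: "mat_deriv (c \<cdot>\<^sub>m A) = rderiv c \<cdot>\<^sub>m A + c \<cdot>\<^sub>m mat_deriv A"
  by (rule eq_matI) (auto simp: mat_deriv_def)

lemma mat_deriv_mult:
  assumes A: "A \<in> carrier_mat nr n" and B: "B \<in> carrier_mat n nc"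
  shows "mat_deriv (A * B) = mat_deriv A * B + A * mat_deriv B" (is "_ = ?R")
proof (rule eq_matI)
  fix i j assume "i < dim_row ?R" "j < dim_col ?R"
  then have ij: "i < nr" "j < nc" using A B by auto
  have "mat_deriv (A * B) $$ (i, j) = rderiv ((A * B) $$ (i, j))"
    using A B ij by simp
  also have "\<dots> = rderiv (\<Sum>l<n. A $$ (i, l) * B $$ (l, j))"
    unfolding mult_mat_index_sum[OF A B ij] ..
  also have "\<dots> = (\<Sum>l<n. rderiv (A $$ (i, l)) * B $$ (l, j)) + (\<Sum>l<n. A $$ (i, l) * rderiv (B $$ (l, j)))"
    by (simp add: rderiv_sum sum.distrib)
  also have "\<dots> = (mat_deriv A * B) $$ (i, j) + (A * mat_deriv B) $$ (i, j)"
    unfolding mult_mat_index_sum[OF mat_deriv_carrier[OF A] B ij]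
      mult_mat_index_sum[OF A mat_deriv_carrier[OF B] ij]
    using A B ij by (intro arg_cong2[where f = "(+)"] sum.cong) auto
  also have "\<dots> = ?R $$ (i, j)"
    using A B ij by simp
  finally show "mat_deriv (A * B) $$ (i, j) = ?R $$ (i, j)" .
qed (use A B in auto)

lemma gauge_eq:
  assumes "M \<in> carrier_mat n n" "T \<in> carrier_mat n n" "Tinv \<in> carrier_mat n n" "T * Tinv = 1\<^sub>m n"
  shows "T * gauge M T Tinv = M * T - mat_deriv T"
proof -
  have "M * T - mat_deriv T \<in> carrier_mat n n" using assms by auto
  then have "T * gauge M T Tinv = (T * Tinv) * (M * T - mat_deriv T)"
    unfolding gauge_def using assms(2,3) by (simp add: assoc_mult_mat[of _ n n _ n _ n])
  then show ?thesis using assms \<open>M * T - mat_deriv T \<in> carrier_mat n n\<close> by simp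
qed

lemma gauge_eq_inverse:
  assumes M: "M \<in> carrier_mat n n" and T: "T \<in> carrier_mat n n" and Ti: "Tinv \<in> carrier_mat n n"
    and inv: "T * Tinv = 1\<^sub>m n" "Tinv * T = 1\<^sub>m n"
  shows "Tinv * M = gauge M T Tinv * Tinv - mat_deriv Tinv"
proof -
  define X where "X = Tinv * mat_deriv T * Tinv"
  have X: "X \<in> carrier_mat n n"
    unfolding X_def by (intro mult_carrier_mat[OF _ Ti] mult_carrier_mat[OF Ti] mat_deriv_carrier[OF T])
  have "mat_deriv T * Tinv + T * mat_deriv Tinv = 0\<^sub>m n n"
    using mat_deriv_mult[OF T Ti] inv(1) by simp
  then have TdTinv: "T * mat_deriv Tinv = - (mat_deriv T * Tinv)"
    using T Ti by (intro add_eq_zero_mat_imp_eq_uminus[of _ n n]) auto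
  have "Tinv * (T * mat_deriv Tinv) = mat_deriv Tinv"
    using assoc_mult_mat[OF Ti T mat_deriv_carrier[OF Ti], symmetric] inv(2) Ti by simp
  then have dTinv: "mat_deriv Tinv = - X"
    using arg_cong[of _ _ "\<lambda>A. Tinv * A", OF TdTinv] T Ti
    by (simp add: X_def assoc_mult_mat[of _ n n _ n _ n] flip: assoc_mult_mat[of Tinv n n T n])
  have MT: "M * T \<in> carrier_mat n n" and dT: "mat_deriv T \<in> carrier_mat n n" using M T by auto
  have "gauge M T Tinv * Tinv = Tinv * (M * T) * Tinv - X"
    unfolding gauge_def X_def mult_minus_distrib_mat[OF Ti MT dT]
    by (rule minus_mult_distrib_mat[OF mult_carrier_mat[OF Ti MT] mult_carrier_mat[OF Ti dT] Ti])
  also have "Tinv * (M * T) * Tinv = Tinv * M * (T * Tinv)"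
    using M T Ti by (simp add: assoc_mult_mat[of _ n n _ n _ n])
  finally have "gauge M T Tinv * Tinv = Tinv * M - X"
    using inv(1) M Ti by simp
  then show ?thesis
    unfolding dTinv using M Ti X by (intro eq_matI) auto
qed

lemma gauge_eq_index:
  assumes M: "M \<in> carrier_mat n n" and T: "T \<in> carrier_mat n n" and MT: "MT \<in> carrier_mat n n"
    and eq: "T * MT = M * T - mat_deriv T" and ij: "i < n" "j < n"
  shows "(\<Sum>l<n. T $$ (i, l) * MT $$ (l, j)) = (\<Sum>l<n. M $$ (i, l) * T $$ (l, j)) - rderiv (T $$ (i, j))"
proof -
  have "(T * MT) $$ (i, j) = (M * T - mat_deriv T) $$ (i, j)" using eq by simp
  then show ?thesis
    using M T MT ij by (simp add: mult_mat_index_sum[OF T MT ij] mult_mat_index_sum[OF M T ij])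
qed

lemma gauge_eq_rescaled:
  assumes M1: "M1 \<in> carrier_mat n n" and M2: "M2 \<in> carrier_mat n n" and T: "T \<in> carrier_mat n n"
    and eq: "T * M2 = M1 * T - mat_deriv T" and du: "rderiv u = 1"
  shows "(u ^ k \<cdot>\<^sub>m T) * (u \<cdot>\<^sub>m M2)
       = (u \<cdot>\<^sub>m M1) * (u ^ k \<cdot>\<^sub>m T) + of_nat k \<cdot>\<^sub>m (u ^ k \<cdot>\<^sub>m T) - u \<cdot>\<^sub>m mat_deriv (u ^ k \<cdot>\<^sub>m T)"
    (is "?L = ?R")
proof (rule eq_matI)
  fix i j assume "i < dim_row ?R" "j < dim_col ?R"
  then have ij: "i < n" "j < n" using M1 T by auto
  have uT: "u ^ k \<cdot>\<^sub>m T \<in> carrier_mat n n" and uM1: "u \<cdot>\<^sub>m M1 \<in> carrier_mat n n"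
    and uM2: "u \<cdot>\<^sub>m M2 \<in> carrier_mat n n"
    using M1 M2 T by auto
  have "?L $$ (i, j) = u ^ Suc k * (\<Sum>l<n. T $$ (i, l) * M2 $$ (l, j))"
    unfolding mult_mat_index_sum[OF uT uM2 ij] using T M2 ij
    by (auto simp: sum_distrib_left algebra_simps intro!: sum.cong)
  also have "\<dots> = ?R $$ (i, j)"
  proof -
    have R: "?R $$ (i, j) = ((u \<cdot>\<^sub>m M1) * (u ^ k \<cdot>\<^sub>m T)) $$ (i, j) + of_nat k * (u ^ k * T $$ (i, j))
          - u * (rderiv (u ^ k) * T $$ (i, j) + u ^ k * rderiv (T $$ (i, j)))"
      using M1 T ij by (simp add: mat_deriv_smult)
    have P: "((u \<cdot>\<^sub>m M1) * (u ^ k \<cdot>\<^sub>m T)) $$ (i, j) = u ^ Suc k * (\<Sum>l<n. M1 $$ (i, l) * T $$ (l, j))"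
      unfolding mult_mat_index_sum[OF uM1 uT ij] using T M1 ij
      by (auto simp: sum_distrib_left algebra_simps intro!: sum.cong)
    have "u * rderiv (u ^ k) = of_nat k * u ^ k" using mult_rderiv_power[of u k] du by simp
    then have D: "u * (rderiv (u ^ k) * T $$ (i, j) + u ^ k * rderiv (T $$ (i, j)))
        = of_nat k * (u ^ k * T $$ (i, j)) + u ^ Suc k * rderiv (T $$ (i, j))"
      by (simp add: algebra_simps)
    show ?thesis
      unfolding R P D gauge_eq_index[OF M1 T M2 eq ij] by (simp add: algebra_simps)
  qed
  finally show "?L $$ (i, j) = ?R $$ (i, j)" .
qed (use M1 M2 T in auto)

section \<open>Gauge transformations between normalized Fuchsian systems\<close>

lemma fuchsian_at_iff: "fuchsian_at x0 M \<longleftrightarrow> mat_regular_at x0 ((rX - rconst x0) \<cdot>\<^sub>m M)"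
  by (simp add: fuchsian_at_def mat_regular_at_def)

lemma residue_at_eq: "residue_at x0 M = mat_eval_at x0 ((rX - rconst x0) \<cdot>\<^sub>m M)"
  by (rule eq_matI) (simp_all add: residue_at_def mat_eval_at_def)

lemma normalization_shift_of_nat:
  fixes N :: "'a::field_char_0 set"
  assumes N: "is_normalization N" and "e \<in> N" "e - of_nat k \<in> N"
  shows "k = 0"
proof -
  obtain m where uniq: "\<And>y. y \<in> N \<and> (\<exists>z::int. y = (e - of_nat k) + of_int z) \<Longrightarrow> y = m"
    using N[unfolded is_normalization_def, rule_format, of "e - of_nat k"] by (elim ex1E) blast
  have "e \<in> N \<and> (\<exists>z::int. e = (e - of_nat k) + of_int z)"
    using assms(2) by (intro conjI exI[of _ "int k"]) auto
  moreover have "e - of_nat k \<in> N \<and> (\<exists>z::int. e - of_nat k = (e - of_nat k) + of_int z)"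
    using assms(3) by (intro conjI exI[of _ 0]) auto
  ultimately have "e = e - of_nat k" using uniq by metis
  then show "k = 0" by simp
qed

lemma mat_pole_order_exists:
  assumes T: "T \<in> carrier_mat n n" and not_regular: "\<not> mat_regular_at x0 T"
  obtains k where "k \<noteq> 0" "mat_regular_at x0 ((rX - rconst x0) ^ k \<cdot>\<^sub>m T)"
    "mat_eval_at x0 ((rX - rconst x0) ^ k \<cdot>\<^sub>m T) \<noteq> 0\<^sub>m n n"
proof -
  define u where "u = rX - rconst x0"
  define k where "k = (LEAST k. mat_regular_at x0 (u ^ k \<cdot>\<^sub>m T))"
  have reg: "mat_regular_at x0 (u ^ k \<cdot>\<^sub>m T)"
    unfolding k_def u_def by (rule LeastI_ex) (rule mat_regular_at_power_smult_ex)
  have "k \<noteq> 0"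
  proof
    assume "k = 0"
    moreover have "1 \<cdot>\<^sub>m T = T" by (rule eq_matI) auto
    ultimately show False using reg not_regular by simp
  qed
  then obtain k' where k': "k = Suc k'" by (cases k) auto
  have S_k': "u ^ k \<cdot>\<^sub>m T = u \<cdot>\<^sub>m (u ^ k' \<cdot>\<^sub>m T)"
    unfolding k' by (rule eq_matI) auto
  have "mat_eval_at x0 (u ^ k \<cdot>\<^sub>m T) \<noteq> 0\<^sub>m n n"
  proof
    assume S0: "mat_eval_at x0 (u ^ k \<cdot>\<^sub>m T) = 0\<^sub>m n n"
    have "mat_regular_at x0 (u ^ k' \<cdot>\<^sub>m T)"
    proof (rule mat_regular_at_divide_linear_factor)
      show "mat_regular_at x0 ((rX - rconst x0) \<cdot>\<^sub>m (u ^ k' \<cdot>\<^sub>m T))"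
        using reg unfolding S_k' by (simp only: u_def)
      show "mat_eval_at x0 ((rX - rconst x0) \<cdot>\<^sub>m (u ^ k' \<cdot>\<^sub>m T))
          = 0\<^sub>m (dim_row (u ^ k' \<cdot>\<^sub>m T)) (dim_col (u ^ k' \<cdot>\<^sub>m T))"
        using S0 T unfolding S_k' by (simp add: u_def)
    qed
    then have "k \<le> k'" unfolding k_def by (rule Least_le)
    then show False using k' by simp
  qed
  then show ?thesis using that \<open>k \<noteq> 0\<close> reg unfolding u_def by blast
qed

text \<open>The lowest-order term of the gauge equation multiplied by \<open>(x - x\<^sub>0)\<^sup>k\<^sup>+\<^sup>1\<close>.\<close>
lemma residue_intertwines_leading_coefficient:
  assumes M1: "M1 \<in> carrier_mat n n" and M2: "M2 \<in> carrier_mat n n" and T: "T \<in> carrier_mat n n"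
    and eq: "T * M2 = M1 * T - mat_deriv T"
    and F1: "fuchsian_at x0 M1" and F2: "fuchsian_at x0 M2"
    and regS: "mat_regular_at x0 ((rX - rconst x0) ^ k \<cdot>\<^sub>m T)"
  shows "(residue_at x0 M1 + of_nat k \<cdot>\<^sub>m 1\<^sub>m n) * mat_eval_at x0 ((rX - rconst x0) ^ k \<cdot>\<^sub>m T)
       = mat_eval_at x0 ((rX - rconst x0) ^ k \<cdot>\<^sub>m T) * residue_at x0 M2"
proof -
  define u where "u = rX - rconst x0"
  define S where "S = u ^ k \<cdot>\<^sub>m T"
  define S0 A B where "S0 = mat_eval_at x0 S"
    and "A = mat_eval_at x0 (u \<cdot>\<^sub>m M1)" and "B = mat_eval_at x0 (u \<cdot>\<^sub>m M2)"
  have S: "S \<in> carrier_mat n n" and S0: "S0 \<in> carrier_mat n n" and A: "A \<in> carrier_mat n n"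
    and uM1: "u \<cdot>\<^sub>m M1 \<in> carrier_mat n n" and uM2: "u \<cdot>\<^sub>m M2 \<in> carrier_mat n n"
    using T M1 M2 by (simp_all add: S_def S0_def A_def)
  have regS: "mat_regular_at x0 S" using regS by (simp add: S_def u_def)
  have regM1: "mat_regular_at x0 (u \<cdot>\<^sub>m M1)" and regM2: "mat_regular_at x0 (u \<cdot>\<^sub>m M2)"
    using F1 F2 by (simp_all add: fuchsian_at_iff u_def)
  have u: "regular_at x0 u" "eval_at x0 u = 0" "rderiv u = 1"
    unfolding u_def rX_minus_rconst by (simp_all add: pderiv_pCons pCons_one)
  have M1S: "mat_regular_at x0 ((u \<cdot>\<^sub>m M1) * S)" "mat_eval_at x0 ((u \<cdot>\<^sub>m M1) * S) = A * S0"
    unfolding A_def S0_def by (rule mat_regular_at_mult[OF uM1 S regM1 regS])+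
  have kS: "mat_regular_at x0 (of_nat k \<cdot>\<^sub>m S)" "mat_eval_at x0 (of_nat k \<cdot>\<^sub>m S) = of_nat k \<cdot>\<^sub>m S0"
    unfolding S0_def using mat_regular_at_smult[OF regular_at_of_nat regS] by simp_all
  have dS: "mat_regular_at x0 (u \<cdot>\<^sub>m mat_deriv S)" "mat_eval_at x0 (u \<cdot>\<^sub>m mat_deriv S) = 0\<^sub>m n n"
    using mat_regular_at_smult[OF u(1) mat_regular_at_deriv[OF regS]] u(2) S
    by (auto simp: mat_eval_at_def intro!: eq_matI)
  have PQ: "(u \<cdot>\<^sub>m M1) * S \<in> carrier_mat n n" "of_nat k \<cdot>\<^sub>m S \<in> carrier_mat n n"
    "u \<cdot>\<^sub>m mat_deriv S \<in> carrier_mat n n"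
    using uM1 S by auto
  have "S0 * B = mat_eval_at x0 (S * (u \<cdot>\<^sub>m M2))"
    unfolding B_def S0_def by (rule mat_regular_at_mult(2)[OF S uM2 regS regM2, symmetric])
  also have "S * (u \<cdot>\<^sub>m M2) = (u \<cdot>\<^sub>m M1) * S + of_nat k \<cdot>\<^sub>m S - u \<cdot>\<^sub>m mat_deriv S"
    unfolding S_def by (rule gauge_eq_rescaled[OF M1 M2 T eq u(3)])
  also have "mat_eval_at x0 \<dots> = A * S0 + of_nat k \<cdot>\<^sub>m S0 - 0\<^sub>m n n"
    using mat_regular_at_diff(2)[OF add_carrier_mat[OF PQ(2)] PQ(3) mat_regular_at_add(1)[OF PQ(1,2) M1S(1) kS(1)] dS(1)]
      mat_regular_at_add(2)[OF PQ(1,2) M1S(1) kS(1)] M1S(2) kS(2) dS(2)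
    by simp
  also have "\<dots> = (A + of_nat k \<cdot>\<^sub>m 1\<^sub>m n) * S0"
    using A S0 by (intro eq_matI) (auto simp: add_mult_distrib_mat[of _ n n] mult_smult_assoc_mat[of _ n n _ n])
  finally show ?thesis
    by (simp add: S0_def S_def A_def B_def residue_at_eq u_def)
qed

text \<open>If \<open>T\<close> had a pole of order \<open>k > 0\<close>, the eigenvalues of \<open>A + k\<close> and \<open>B\<close> would lie in \<open>N + k\<close>
  and \<open>N\<close>, which are disjoint, so the leading coefficient would vanish.\<close>
lemma normalized_gauge_regular:
  fixes M1 M2 T :: "'a::{alg_closed_field, field_char_0} ratfun mat"
  assumes M1: "M1 \<in> carrier_mat n n" and M2: "M2 \<in> carrier_mat n n" and T: "T \<in> carrier_mat n n"
    and eq: "T * M2 = M1 * T - mat_deriv T"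
    and N: "is_normalization N" and norm1: "normalized_at N x0 M1" and norm2: "normalized_at N x0 M2"
  shows "mat_regular_at x0 T"
proof (rule ccontr)
  assume "\<not> mat_regular_at x0 T"
  then obtain k where k: "k \<noteq> 0" "mat_regular_at x0 ((rX - rconst x0) ^ k \<cdot>\<^sub>m T)"
    and S0: "mat_eval_at x0 ((rX - rconst x0) ^ k \<cdot>\<^sub>m T) \<noteq> 0\<^sub>m n n"
    by (rule mat_pole_order_exists[OF T])
  define A B where "A = residue_at x0 M1" and "B = residue_at x0 M2"
  have A: "A \<in> carrier_mat n n" and B: "B \<in> carrier_mat n n"
    using M1 M2 by (simp_all add: A_def B_def residue_at_eq)
  have "mat_eval_at x0 ((rX - rconst x0) ^ k \<cdot>\<^sub>m T) = 0\<^sub>m n n"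
  proof (rule sylvester_homogeneous_zero)
    show "(A + of_nat k \<cdot>\<^sub>m 1\<^sub>m n) * mat_eval_at x0 ((rX - rconst x0) ^ k \<cdot>\<^sub>m T)
        = mat_eval_at x0 ((rX - rconst x0) ^ k \<cdot>\<^sub>m T) * B"
      unfolding A_def B_def using norm1 norm2 unfolding normalized_at_def
      by (intro residue_intertwines_leading_coefficient[OF M1 M2 T eq _ _ k(2)]) simp_all
    fix e assume "eigenvalue (A + of_nat k \<cdot>\<^sub>m 1\<^sub>m n) e" "eigenvalue B e"
    then have "e - of_nat k \<in> N" "e \<in> N"
      using eigenvalue_add_smult_one[OF A] norm1 norm2 by (auto simp: normalized_at_def A_def B_def)
    then show False
      using normalization_shift_of_nat[OF N] k(1) by blast
  qed (use A B T in simp_all)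
  then show False using S0 by blast
qed

section \<open>The point at infinity\<close>

interpretation rconst: comm_ring_hom rconst
  by unfold_locales (simp_all add: rconst_def pCons_one flip: to_fract_add to_fract_mult)
interpretation rconst_poly: map_poly_comm_ring_hom rconst ..

definition subst_inv_poly :: "'a::field poly \<Rightarrow> 'a ratfun" where
  "subst_inv_poly p = poly (map_poly rconst p) (inverse rX)"

interpretation subst_inv_poly: comm_ring_hom subst_inv_poly
  by unfold_locales (simp_all add: subst_inv_poly_def rconst_poly.hom_add rconst_poly.hom_mult)

lemma subst_inv_poly_pCons: "subst_inv_poly (pCons a p) = rconst a + inverse rX * subst_inv_poly p"
  unfolding subst_inv_poly_def by (subst Polynomial.map_poly_pCons) simp_all

lemma rX_nonzero [simp]: "rX \<noteq> 0"
  by (simp add: rX_def)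

lemma to_fract_pCons_0: "to_fract (pCons 0 p) = rX * to_fract p"
  unfolding rX_def by (simp flip: to_fract_mult)

lemma to_fract_monom: "to_fract (monom c k) = rconst c * rX ^ k"
  by (induction k) (simp_all add: monom_Suc to_fract_pCons_0 rconst_def monom_0)

lemma subst_inv_poly_mult_power_degree: "subst_inv_poly p * rX ^ degree p = to_fract (reflect_poly p)"
proof (induction p)
  case (pCons c p)
  show ?case
  proof (cases "p = 0")
    case True
    then show ?thesis by (simp add: subst_inv_poly_pCons rconst_def)
  next
    case False
    have "subst_inv_poly (pCons c p) * rX ^ degree (pCons c p) = rconst c * rX ^ Suc (degree p) + subst_inv_poly p * rX ^ degree p"
      using False by (simp add: subst_inv_poly_pCons field_simps)
    then show ?thesis
      using pCons.IH False by (simp add: reflect_poly_pCons' to_fract_monom)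
  qed
qed simp

lemma subst_inv_poly_nonzero: "p \<noteq> 0 \<Longrightarrow> subst_inv_poly p \<noteq> 0"
  using subst_inv_poly_mult_power_degree[of p] by auto

lemma subst_inv_eq: "subst_inv r = subst_inv_poly (rnum r) / subst_inv_poly (rden r)"
proof -
  define a b where "a = rnum r" and "b = rden r"
  have "b \<noteq> 0" unfolding b_def by (rule rden_nonzero)
  have "subst_inv r = to_fract (reflect_poly a * monom 1 (degree b)) / to_fract (reflect_poly b * monom 1 (degree a))"
    unfolding subst_inv_def a_def b_def by (simp add: Fract_conv_to_fract)
  also have "\<dots> = (subst_inv_poly a * rX ^ degree a * rX ^ degree b) / (subst_inv_poly b * rX ^ degree b * rX ^ degree a)"
    by (simp add: to_fract_monom rconst_def flip: subst_inv_poly_mult_power_degree)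
  also have "\<dots> = subst_inv_poly a / subst_inv_poly b"
    using subst_inv_poly_nonzero[OF \<open>b \<noteq> 0\<close>] by (simp add: field_simps)
  finally show ?thesis unfolding a_def b_def .
qed

lemma subst_inv_quotient:
  assumes "b \<noteq> 0"
  shows "subst_inv (to_fract a / to_fract b) = subst_inv_poly a / subst_inv_poly b"
proof -
  define r where "r = to_fract a / to_fract b"
  have "rnum r * b = a * rden r"
    using rnum_rden[of r] rden_nonzero[of r] assms to_fract_quotient_eq_iff unfolding r_def by metis
  then have "subst_inv_poly (rnum r) * subst_inv_poly b = subst_inv_poly a * subst_inv_poly (rden r)"
    by (metis subst_inv_poly.hom_mult)
  then show ?thesis
    unfolding r_def[symmetric] subst_inv_eq
    using subst_inv_poly_nonzero[OF rden_nonzero[of r]] subst_inv_poly_nonzero[OF assms] by (simp add: frac_eq_eq)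
qed

lemma subst_inv_to_fract [simp]: "subst_inv (to_fract a) = subst_inv_poly a"
  using subst_inv_quotient[of 1 a] by simp

lemma subst_inv_add: "subst_inv (u + v) = subst_inv u + subst_inv v"
  and subst_inv_mult: "subst_inv (u * v) = subst_inv u * subst_inv v"
proof -
  obtain a b where ab: "b \<noteq> 0" "u = to_fract a / to_fract b" by (rule ratfun_cases)
  obtain c d where cd: "d \<noteq> 0" "v = to_fract c / to_fract d" by (rule ratfun_cases)
  have nz: "subst_inv_poly b \<noteq> 0" "subst_inv_poly d \<noteq> 0"
    using ab(1) cd(1) by (simp_all add: subst_inv_poly_nonzero)
  have bd: "b * d \<noteq> 0" using ab(1) cd(1) by simp
  have "u + v = to_fract (a * d + c * b) / to_fract (b * d)" "u * v = to_fract (a * c) / to_fract (b * d)"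
    using ab cd by (simp_all add: field_simps)
  then have "subst_inv (u + v) = subst_inv_poly (a * d + c * b) / subst_inv_poly (b * d)"
    "subst_inv (u * v) = subst_inv_poly (a * c) / subst_inv_poly (b * d)"
    by (simp_all only: subst_inv_quotient[OF bd])
  then show "subst_inv (u + v) = subst_inv u + subst_inv v" "subst_inv (u * v) = subst_inv u * subst_inv v"
    unfolding ab(2) cd(2) subst_inv_quotient[OF ab(1)] subst_inv_quotient[OF cd(1)] using nz
    by (simp_all add: field_simps subst_inv_poly.hom_add subst_inv_poly.hom_mult)
qed

interpretation subst_inv: comm_ring_hom subst_inv
  by unfold_locales
    (simp_all add: subst_inv_add subst_inv_mult subst_inv_to_fract[of 0, simplified] subst_inv_to_fract[of 1, simplified])

lemma rderiv_inverse_rX: "rderiv (inverse rX) = - inverse (rX * rX)"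
  using rderiv_divide[of rX 1] by (simp add: divide_inverse)

lemma subst_inv_poly_pderiv: "subst_inv_poly (pderiv p) = - (rX * rX) * rderiv (subst_inv_poly p)"
proof (induction p)
  case (pCons a p)
  have d: "subst_inv_poly (pderiv (pCons a p)) = subst_inv_poly p + inverse rX * subst_inv_poly (pderiv p)"
    by (simp add: pderiv_pCons subst_inv_poly_pCons subst_inv_poly.hom_add)
  have r: "rderiv (subst_inv_poly (pCons a p)) = - inverse (rX * rX) * subst_inv_poly p + inverse rX * rderiv (subst_inv_poly p)"
    by (simp add: subst_inv_poly_pCons rderiv_inverse_rX)
  show ?case
    unfolding d r pCons.IH by (simp add: field_simps)
qed simp

lemma subst_inv_rderiv: "subst_inv (rderiv r) = - (rX * rX) * rderiv (subst_inv r)"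
proof -
  obtain a b where ab: "b \<noteq> 0" "r = to_fract a / to_fract b" by (rule ratfun_cases)
  have nz: "subst_inv_poly b \<noteq> 0" using subst_inv_poly_nonzero[OF ab(1)] .
  have "subst_inv (rderiv r) = subst_inv_poly (pderiv a * b - a * pderiv b) / subst_inv_poly (b * b)"
    unfolding ab(2) rderiv_quotient[OF ab(1)] using ab(1) by (intro subst_inv_quotient) simp
  also have "\<dots> = - (rX * rX) * rderiv (subst_inv_poly a / subst_inv_poly b)"
    unfolding rderiv_divide[OF nz] using nz
    by (simp add: subst_inv_poly_pderiv subst_inv_poly.hom_mult subst_inv_poly.hom_minus field_simps)
  finally show ?thesis unfolding ab(2) subst_inv_quotient[OF ab(1)] .
qed

lemma at_infinity_transform_carrier [simp]:
  "M \<in> carrier_mat nr nc \<Longrightarrow> at_infinity_transform M \<in> carrier_mat nr nc"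
  and dim_row_at_infinity_transform [simp]: "dim_row (at_infinity_transform M) = dim_row M"
  and dim_col_at_infinity_transform [simp]: "dim_col (at_infinity_transform M) = dim_col M"
  by (simp_all add: at_infinity_transform_def)

lemma gauge_eq_at_infinity:
  assumes M: "M \<in> carrier_mat n n" and T: "T \<in> carrier_mat n n" and MT: "MT \<in> carrier_mat n n"
    and eq: "T * MT = M * T - mat_deriv T"
  shows "map_mat subst_inv T * at_infinity_transform MT
       = at_infinity_transform M * map_mat subst_inv T - mat_deriv (map_mat subst_inv T)"
    (is "?L = ?R")
proof (rule eq_matI)
  let ?s = subst_inv and ?c = "- inverse (rX * rX) :: 'a ratfun"
  have sT: "map_mat subst_inv T \<in> carrier_mat n n" using T by simp
  fix i j assume "i < dim_row ?R" "j < dim_col ?R"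
  then have ij: "i < n" "j < n" using M T by auto
  have "?L $$ (i, j) = (\<Sum>l<n. ?s (T $$ (i, l)) * (?c * ?s (MT $$ (l, j))))"
    unfolding mult_mat_index_sum[OF sT at_infinity_transform_carrier[OF MT] ij]
    using T MT ij by (intro sum.cong) (auto simp: at_infinity_transform_def divide_inverse)
  also have "\<dots> = ?c * ?s (\<Sum>l<n. T $$ (i, l) * MT $$ (l, j))"
    by (simp add: subst_inv.hom_sum subst_inv_mult sum_distrib_left algebra_simps)
  also have "\<dots> = ?c * ?s (\<Sum>l<n. M $$ (i, l) * T $$ (l, j)) - rderiv (?s (T $$ (i, j)))"
    unfolding gauge_eq_index[OF M T MT eq ij] subst_inv.hom_minus subst_inv_rderiv
    by (simp add: field_simps)
  also have "\<dots> = ?R $$ (i, j)"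
  proof -
    have "(at_infinity_transform M * map_mat subst_inv T) $$ (i, j)
        = (\<Sum>l<n. (?c * ?s (M $$ (i, l))) * ?s (T $$ (l, j)))"
      unfolding mult_mat_index_sum[OF at_infinity_transform_carrier[OF M] sT ij]
      using T M ij by (intro sum.cong) (auto simp: at_infinity_transform_def divide_inverse)
    also have "\<dots> = ?c * ?s (\<Sum>l<n. M $$ (i, l) * T $$ (l, j))"
      by (simp add: subst_inv.hom_sum subst_inv_mult sum_distrib_left algebra_simps)
    finally show ?thesis using M T ij by simp
  qed
  finally show "?L $$ (i, j) = ?R $$ (i, j)" .
qed (use M T MT in auto)

lemma degree_eq_0_if_subst_inv_poly_regular:
  assumes "regular_at 0 (subst_inv_poly p)"
  shows "degree p = 0"
proof (rule ccontr)
  assume deg: "degree p \<noteq> 0"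
  obtain a b where ab: "poly b 0 \<noteq> 0" "subst_inv_poly p = to_fract a / to_fract b"
    using assms by (rule regular_atE)
  have "to_fract (reflect_poly p) / to_fract ([:0, 1:] ^ degree p) = to_fract a / to_fract b"
    using subst_inv_poly_mult_power_degree[of p] ab(2) by (simp add: rX_def field_simps)
  then have "reflect_poly p * b = a * [:0, 1:] ^ degree p"
    using ab(1) by (subst (asm) to_fract_quotient_eq_iff) auto
  then have "poly (reflect_poly p * b) 0 = poly (a * [:0, 1:] ^ degree p) 0" by simp
  then have "lead_coeff p * poly b 0 = 0" using deg by (simp add: poly_power)
  then show False using deg ab(1) by auto
qed

lemma polynomial_if_normalized_gauge:
  fixes M T MT :: "'a::{alg_closed_field, field_char_0} ratfun mat"
  assumes M: "M \<in> carrier_mat n n" and T: "T \<in> carrier_mat n n" and MT: "MT \<in> carrier_mat n n"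
    and eq: "T * MT = M * T - mat_deriv T" and N: "\<And>x0. is_normalization (N x0)"
    and norm: "\<And>x0. normalized_at (N x0) x0 M" "\<And>x0. normalized_at (N x0) x0 MT"
  obtains P where "P \<in> carrier_mat n n" "T = map_mat to_fract P"
proof -
  have "is_polynomial (T $$ (i, j))" if "i < n" "j < n" for i j
    using normalized_gauge_regular[OF M MT T eq N norm] T that
    by (intro is_polynomial_if_regular_everywhere) (simp add: mat_regular_at_def)
  then have "\<exists>p. T $$ (i, j) = to_fract p" if "i < n" "j < n" for i j
    using that unfolding is_polynomial_def by blast
  then obtain f where f: "\<And>i j. i < n \<Longrightarrow> j < n \<Longrightarrow> T $$ (i, j) = to_fract (f i j)"
    by metis
  have "T = map_mat to_fract (mat n n (\<lambda>(i, j). f i j))"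
    using T f by (intro eq_matI) auto
  then show ?thesis using that[of "mat n n (\<lambda>(i, j). f i j)"] by simp
qed

lemma det_constant_if_polynomial_inverse:
  assumes P: "P \<in> carrier_mat n n" and Q: "Q \<in> carrier_mat n n"
    and inv: "map_mat to_fract P * map_mat to_fract Q = 1\<^sub>m n"
  shows "\<exists>c. c \<noteq> 0 \<and> det (map_mat to_fract P) = rconst c"
proof -
  interpret to_fract: comm_ring_hom "to_fract :: 'a poly \<Rightarrow> 'a poly fract"
    by unfold_locales simp_all
  have "det (map_mat to_fract P * map_mat to_fract Q) = 1"
    unfolding inv by simp
  then have "to_fract (det P * det Q) = to_fract 1"
    using P Q by (simp add: det_mult[of _ n])
  then have "det P * det Q = 1" by (simp only: to_fract_eq_iff)
  then have "is_unit (det P)" by (rule dvdI[OF sym])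
  then obtain c where "det P = [:c:]" "c \<noteq> 0"
    unfolding is_unit_poly_iff by (auto simp: dvd_field_iff)
  then show ?thesis by (auto simp: rconst_def)
qed

lemma constant_if_normalized_gauge_at_infinity:
  fixes M MT :: "'a::{alg_closed_field, field_char_0} ratfun mat"
  assumes M: "M \<in> carrier_mat n n" and P: "P \<in> carrier_mat n n" and MT: "MT \<in> carrier_mat n n"
    and eq: "map_mat to_fract P * MT = M * map_mat to_fract P - mat_deriv (map_mat to_fract P)"
    and N: "is_normalization N"
    and norm: "normalized_at_infinity N M" "normalized_at_infinity N MT"
  shows "\<exists>C. map_mat to_fract P = map_mat rconst C"
proof -
  let ?T = "map_mat to_fract P"
  have T: "?T \<in> carrier_mat n n" using P by simp
  have "mat_regular_at 0 (map_mat subst_inv ?T)"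
    using norm
    by (intro normalized_gauge_regular[OF _ _ _ gauge_eq_at_infinity[OF M T MT eq] N])
      (use M MT T in \<open>simp_all add: normalized_at_infinity_def fuchsian_at_infinity_def
        residue_at_infinity_def normalized_at_def\<close>)
  then have "degree (P $$ (i, j)) = 0" if "i < n" "j < n" for i j
    using P that by (intro degree_eq_0_if_subst_inv_poly_regular) (simp add: mat_regular_at_def)
  then have "?T = map_mat rconst (map_mat (\<lambda>p. coeff p 0) P)"
    using P by (intro eq_matI) (auto simp: rconst_def intro: degree_0_id[symmetric])
  then show ?thesis by blast
qed

theorem mainTheorem2:
  fixes M T Tinv :: "'a::{alg_closed_field, field_char_0} ratfun mat"
    and n :: nat
    and N :: "'a \<Rightarrow> 'a set"
    and Ninf :: "'a set"
  assumes dims: "M \<in> carrier_mat n n" "T \<in> carrier_mat n n" "Tinv \<in> carrier_mat n n"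
    and inv: "T * Tinv = 1\<^sub>m n" "Tinv * T = 1\<^sub>m n"
    and Nnorm: "\<And>x0. is_normalization (N x0)"
    and Ninf_norm: "is_normalization Ninf"
    and M_norm: "\<And>x0. normalized_at (N x0) x0 M"
    and MT_norm: "\<And>x0. normalized_at (N x0) x0 (gauge M T Tinv)"
  shows "(\<forall>i<n. \<forall>j<n. is_polynomial (T $$ (i, j)) \<and> is_polynomial (Tinv $$ (i, j)))
       \<and> (\<exists>c. c \<noteq> 0 \<and> det T = rconst c)
       \<and> (normalized_at_infinity Ninf M \<and> normalized_at_infinity Ninf (gauge M T Tinv)
            \<longrightarrow> (\<exists>C :: 'a mat. T = map_mat rconst C))"
proof -
  define G where "G = gauge M T Tinv"
  have G: "G \<in> carrier_mat n n" unfolding G_def gauge_def using dims by auto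
  have eq: "T * G = M * T - mat_deriv T"
    unfolding G_def by (rule gauge_eq[OF dims inv(1)])
  have eq_inv: "Tinv * M = G * Tinv - mat_deriv Tinv"
    unfolding G_def by (rule gauge_eq_inverse[OF dims inv])
  obtain P where P: "P \<in> carrier_mat n n" "T = map_mat to_fract P"
    using polynomial_if_normalized_gauge[OF dims(1,2) G eq Nnorm M_norm MT_norm[folded G_def]] .
  obtain Q where Q: "Q \<in> carrier_mat n n" "Tinv = map_mat to_fract Q"
    using polynomial_if_normalized_gauge[OF G dims(3,1) eq_inv Nnorm MT_norm[folded G_def] M_norm] .
  have "\<forall>i<n. \<forall>j<n. is_polynomial (T $$ (i, j)) \<and> is_polynomial (Tinv $$ (i, j))"
    using P Q by (auto simp: is_polynomial_def)
  moreover have "\<exists>c. c \<noteq> 0 \<and> det T = rconst c"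
    unfolding P(2) by (rule det_constant_if_polynomial_inverse[OF P(1) Q(1) inv(1)[unfolded P(2) Q(2)]])
  moreover have "\<exists>C. T = map_mat rconst C"
    if "normalized_at_infinity Ninf M" "normalized_at_infinity Ninf G"
    unfolding P(2) by (rule constant_if_normalized_gauge_at_infinity[OF dims(1) P(1) G eq[unfolded P(2)] Ninf_norm that])
  ultimately show ?thesis unfolding G_def by blast
qed

end
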